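(* Let $p$ be a prime, $m,t\ge 1$, $B=\mathrm{GF}(p^m)$ and $F=\mathrm{GF}(p^{mt})$, and assume that $t$ is divisible by $p$ (the characteristic of $F$). Let $n=|F|=|B|^t$, $k=n(1-1/|B|)$, and let $\mathcal{C}=\mathrm{RS}(F,k)=\{(f(\alpha))_{\alpha\in F} : f\in F[x],\ \deg f\le k-1\}$, where the symbol $f(\alpha)$ is stored at the node indexed by $\alpha$. Let $K=\ker(\mathrm{Tr}_{F/B})$. Suppose $f(\alpha^* )$, $f(\overline{\alpha})$, $f(\alpha')$ are three erased symbols, with $\alpha^*,\overline{\alpha},\alpha'$ distinct, such that $$\left\{\frac{\overline{\alpha}-\alpha^*}{\overline{\alpha}-\alpha'},\ \frac{\alpha'-\overline{\alpha}}{\alpha'-\alpha^*},\ \frac{\alpha^*-\alpha'}{\alpha^*-\overline{\alpha}}\right\}\cap K\neq\varnothing.$$ Then there exists a distributed repair scheme in which all three erased symbols are recovered with a total repair bandwidth of $3(n-1)$ sub-symbols (elements of $B$).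
   Context: Elements of $F$ are called symbols and elements of $B$ sub-symbols. The trace is $\mathrm{Tr}_{F/B}(x)=\sum_{i=0}^{t-1}x^{|B|^i}$. In distributed repair, each erased symbol is reconstructed at its own replacement node; replacement nodes download sub-symbols from surviving nodes (computed from the surviving node's stored symbol) and may exchange sub-symbols among themselves (computed from data they have already obtained). The repair bandwidth is the total number of sub-symbols downloaded by all replacement nodes. *)

theory Defs
  imports "HOL-Computational_Algebra.Polynomial" "HOL-Library.Cardinality"
begin

definition subfield_B :: "nat \<Rightarrow> 'a::{finite,field} set" where
  "subfield_B q = {x. x ^ q = x}"

definition trace_FB :: "nat \<Rightarrow> nat \<Rightarrow> 'a::{finite,field} \<Rightarrow> 'a" where
  "trace_FB q t x = (\<Sum>i<t. x ^ (q ^ i))"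

definition RS_code :: "nat \<Rightarrow> ('a::{finite,field} \<Rightarrow> 'a) set" where
  "RS_code k = {(\<lambda>\<alpha>. poly f \<alpha>) | f. degree f \<le> k - 1}"

text \<open>Replacement nodes are indexed 0,1,2,... (replacement node j
  rebuilds the erased symbol at position E!j).  A protocol is a list of transmissions, each
  carrying ONE sub-symbol (element of B), executed in order.  A transmission (src, dst, g):
  src = Inl alpha: surviving node alpha sends g [c alpha], computed from its stored symbol;
  src = Inr j: replacement node j sends g applied to the list of sub-symbols it has received
  so far.\<close>
type_synonym 'a transmission = "('a + nat) \<times> nat \<times> ('a list \<Rightarrow> 'a)"

definition tx_step :: "('a \<Rightarrow> 'a) \<Rightarrow> 'a transmission \<Rightarrow> (nat \<Rightarrow> 'a list) \<Rightarrow> (nat \<Rightarrow> 'a list)" where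
  "tx_step c m st = (case m of (src, dst, g) \<Rightarrow>
     st(dst := st dst @ [g (case src of Inl \<alpha> \<Rightarrow> [c \<alpha>] | Inr j \<Rightarrow> st j)]))"

definition run_protocol :: "('a \<Rightarrow> 'a) \<Rightarrow> 'a transmission list \<Rightarrow> nat \<Rightarrow> 'a list" where
  "run_protocol c ms = fold (tx_step c) ms (\<lambda>_. [])"

definition valid_protocol :: "'a set \<Rightarrow> 'a list \<Rightarrow> 'a transmission list \<Rightarrow> bool" where
  "valid_protocol B E ms \<longleftrightarrow>
     (\<forall>(src, dst, g) \<in> set ms.
        dst < length E \<and>
        (case src of Inl \<alpha> \<Rightarrow> \<alpha> \<notin> set E | Inr j \<Rightarrow> j < length E) \<and>
        (\<forall>xs. g xs \<in> B))"

definition repairs :: "('a \<Rightarrow> 'a) set \<Rightarrow> 'a list \<Rightarrow> 'a transmission list \<Rightarrow> bool" where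
  "repairs C E ms \<longleftrightarrow>
     (\<exists>dec :: nat \<Rightarrow> 'a list \<Rightarrow> 'a. \<forall>c \<in> C. \<forall>j < length E. dec j (run_protocol c ms j) = c (E ! j))"

definition distributed_repair_scheme :: "'a set \<Rightarrow> ('a \<Rightarrow> 'a) set \<Rightarrow> 'a list \<Rightarrow> nat \<Rightarrow> bool" where
  "distributed_repair_scheme B C E b \<longleftrightarrow>
     (\<exists>ms. valid_protocol B E ms \<and> repairs C E ms \<and> length ms = b)"

end

theory Submission
  imports Defs "HOL-Computational_Algebra.Primes"
begin

text \<open>
  Let \<open>q = |B|\<close> and \<open>n = |F| = q^t\<close>. For a codeword \<open>c = (f \<alpha>)\<^sub>\<alpha>\<close> with
  \<open>deg f < n - n/q\<close> the dual-code argument gives the trace repair formula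
  \<open>f \<beta> = - (\<Sum>\<alpha>\<noteq>\<beta>. (\<alpha> - \<beta>) Tr (f \<alpha> / (\<alpha> - \<beta>)))\<close>: expanding \<open>Tr\<close>, the term of the
  identity Frobenius is \<open>\<Sum>\<alpha>\<noteq>\<beta>. f \<alpha> = - f \<beta>\<close>, and for \<open>0 < j < t\<close> the term of
  \<open>x \<mapsto> x^(q^j)\<close> is the \<open>q^j\<close>-th power of \<open>\<Sum>\<alpha>. (\<alpha> - \<beta>)^(q^(t-j) - 1) f \<alpha>\<close>, a sum over
  \<open>F\<close> of a polynomial of degree \<open>< n - 1\<close>, hence \<open>0\<close>.

  So replacement node \<open>e\<close> downloads \<open>Tr (c \<alpha> / (\<alpha> - e))\<close> from each of the \<open>n - 3\<close>
  survivors and lacks only the two sub-symbols of the other erased points. Adding up the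
  terms of the formula it knows gives a partial sum \<open>S\<close>, and \<open>Tr (S / (e - d))\<close> is what
  node \<open>d\<close> needs, \<open>Tr (c e / (e - d))\<close>, up to the contributions of the sub-symbols
  \<open>b \<in> B\<close> that \<open>e\<close> lacks: the one at \<open>d\<close> contributes \<open>Tr (-b) = -t b = 0\<close> since \<open>p\<close>
  divides \<open>t\<close>, any other one, at \<open>r\<close>, contributes \<open>b Tr ((r - e) / (e - d))\<close>, and the
  hypothesis on the kernel of the trace makes this vanish for the first exchange. Six
  relayed sub-symbols then complete all three nodes: \<open>3 (n - 3) + 6 = 3 (n - 1)\<close>.
\<close>

lemma CARD_field_ge_2: "CARD('a::{finite,field}) \<ge> 2"
proof -
  have "card {0, 1::'a} \<le> CARD('a)" by (rule card_mono) auto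
  then show ?thesis by simp
qed

lemma of_nat_CARD_eq_0: "of_nat CARD('a::{finite,field}) = (0::'a)"
proof -
  have "(\<Sum>x\<in>UNIV. x) = (\<Sum>x\<in>UNIV. x + (1::'a))"
    by (rule sum.reindex_bij_witness[of _ "\<lambda>y. y + 1" "\<lambda>y. y - 1"]) auto
  then show ?thesis by (simp add: sum.distrib)
qed

lemma prime_CHAR_finite_field: "prime CHAR('a::{finite,field})"
  by (intro prime_CHAR_semidom finite_imp_CHAR_pos) simp

lemma CHAR_eq_prime_if_CARD_eq_power:
  assumes "prime p" "CARD('a::{finite,field}) = p ^ e"
  shows "CHAR('a) = p"
proof -
  have "of_nat (p ^ e) = (0::'a)" using of_nat_CARD_eq_0[where 'a='a] assms(2) by simp
  then have "CHAR('a) dvd p ^ e" by (simp only: of_nat_eq_0_iff_char_dvd)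
  then have "CHAR('a) dvd p" using prime_CHAR_finite_field[where 'a='a] prime_dvd_power by blast
  then show ?thesis using prime_CHAR_finite_field[where 'a='a] assms(1) primes_dvd_imp_eq by blast
qed

lemma power_CARD_minus_1_eq_1:
  assumes "(x::'a::{finite,field}) \<noteq> 0"
  shows "x ^ (CARD('a) - 1) = 1"
proof -
  have "(\<Prod>y\<in>UNIV-{0}. x * y) = (\<Prod>y\<in>UNIV-{0::'a}. y)"
    by (rule prod.reindex_bij_witness[of _ "\<lambda>y. y / x" "\<lambda>y. x * y"]) (use assms in auto)
  moreover have "(\<Prod>y\<in>UNIV-{0}. x * y) = x ^ (CARD('a) - 1) * (\<Prod>y\<in>UNIV-{0::'a}. y)"
    by (simp add: prod.distrib card_Diff_singleton)
  moreover have "(\<Prod>y\<in>UNIV-{0::'a}. y) \<noteq> 0" by simp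
  ultimately show ?thesis by simp
qed

lemma power_CARD_eq_self: "(x::'a::{finite,field}) ^ CARD('a) = x"
proof (cases "x = 0")
  case False
  have "x ^ CARD('a) = x * x ^ (CARD('a) - 1)"
    using CARD_field_ge_2[where 'a='a] by (simp flip: power_Suc)
  then show ?thesis using power_CARD_minus_1_eq_1[OF False] by simp
qed simp

lemma sum_UNIV_power_eq_0:
  assumes "i < CARD('a::{finite,field}) - 1"
  shows "(\<Sum>x\<in>(UNIV::'a set). x ^ i) = 0"
proof (cases "i = 0")
  case True
  then show ?thesis using of_nat_CARD_eq_0[where 'a='a] by simp
next
  case False
  let ?P = "monom (1::'a) i - 1"
  have "coeff ?P i = 1" using False by (simp add: coeff_monom)
  then have "?P \<noteq> 0" by (metis coeff_0 zero_neq_one)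
  have "degree ?P \<le> i" by (intro degree_diff_le) (auto simp: degree_monom_le)
  have "\<exists>g::'a. g \<noteq> 0 \<and> g ^ i \<noteq> 1"
  proof (rule ccontr)
    assume "\<not> ?thesis"
    then have "UNIV - {0} \<subseteq> {x. poly ?P x = 0}" by (auto simp: poly_monom)
    then have "card (UNIV - {0::'a}) \<le> card {x. poly ?P x = 0}"
      by (intro card_mono poly_roots_finite \<open>?P \<noteq> 0\<close>)
    also have "\<dots> \<le> i"
      using card_poly_roots_bound[OF \<open>?P \<noteq> 0\<close>] \<open>degree ?P \<le> i\<close> by linarith
    finally show False using assms by (simp add: card_Diff_singleton)
  qed
  then obtain g :: 'a where g: "g \<noteq> 0" "g ^ i \<noteq> 1" by blast
  have "(\<Sum>x\<in>UNIV. x ^ i) = (\<Sum>x\<in>UNIV. (g * x) ^ i)"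
    by (rule sum.reindex_bij_witness[of _ "\<lambda>y. g * y" "\<lambda>y. y / g"]) (use g in auto)
  also have "\<dots> = g ^ i * (\<Sum>x\<in>(UNIV::'a set). x ^ i)"
    by (simp add: power_mult_distrib sum_distrib_left)
  finally show ?thesis using g by (simp add: algebra_simps)
qed

lemma sum_UNIV_poly_eq_0:
  assumes "degree h < CARD('a::{finite,field}) - 1"
  shows "(\<Sum>x\<in>(UNIV::'a set). poly h x) = 0"
proof -
  have "(\<Sum>x\<in>(UNIV::'a set). poly h x)
        = (\<Sum>i\<le>degree h. coeff h i * (\<Sum>x\<in>UNIV. x ^ i))"
    unfolding poly_altdef sum_distrib_left by (subst sum.swap) (simp add: mult.assoc)
  also have "\<dots> = 0" using assms by (intro sum.neutral) (simp add: sum_UNIV_power_eq_0)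
  finally show ?thesis .
qed

lemma power_CHAR_power_add:
  "q = CHAR('a::{finite,field}) ^ m \<Longrightarrow> (x + y :: 'a) ^ q = x ^ q + y ^ q"
  by (rule freshmans_dream'[OF prime_CHAR_finite_field])

lemma power_CHAR_power_diff:
  assumes "q = CHAR('a::{finite,field}) ^ m"
  shows "(x - y :: 'a) ^ q = x ^ q - y ^ q"
  using power_CHAR_power_add[OF assms, of "x - y" y] by (simp add: algebra_simps)

lemma power_CHAR_power_sum:
  "q = CHAR('a::{finite,field}) ^ m \<Longrightarrow> (sum f A :: 'a) ^ q = (\<Sum>a\<in>A. f a ^ q)"
  by (rule freshmans_dream_sum'[OF prime_CHAR_finite_field])

lemma power_of_CHAR_power:
  "q = CHAR('a::{finite,field}) ^ m \<Longrightarrow> q ^ i = CHAR('a) ^ (m * i)"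
  by (simp add: power_mult)

lemma trace_FB_add:
  "q = CHAR('a::{finite,field}) ^ m \<Longrightarrow>
    trace_FB q t (x + y :: 'a) = trace_FB q t x + trace_FB q t y"
  unfolding trace_FB_def by (simp add: power_CHAR_power_add[OF power_of_CHAR_power] sum.distrib)

lemma trace_FB_diff:
  "q = CHAR('a::{finite,field}) ^ m \<Longrightarrow>
    trace_FB q t (x - y :: 'a) = trace_FB q t x - trace_FB q t y"
  unfolding trace_FB_def by (simp add: power_CHAR_power_diff[OF power_of_CHAR_power] sum_subtractf)

lemma trace_FB_zero:
  assumes "q = CHAR('a::{finite,field}) ^ m"
  shows "trace_FB q t (0 :: 'a) = 0"
  using trace_FB_diff[OF assms, of t 0 0] by simp

lemma trace_FB_minus:
  assumes "q = CHAR('a::{finite,field}) ^ m"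
  shows "trace_FB q t (- x :: 'a) = - trace_FB q t x"
  using trace_FB_diff[OF assms, of t 0 x] trace_FB_zero[OF assms] by simp

lemma power_power_subfield_B: "b \<in> subfield_B q \<Longrightarrow> b ^ (q ^ i) = b"
  unfolding subfield_B_def by (induction i) (simp_all add: power_mult mult.commute[of q])

lemma trace_FB_mult_subfield_B:
  "b \<in> subfield_B q \<Longrightarrow> trace_FB q t (b * x :: 'a::{finite,field}) = b * trace_FB q t x"
  unfolding trace_FB_def by (simp add: power_mult_distrib power_power_subfield_B sum_distrib_left)

lemma trace_FB_subfield_B_eq_0:
  assumes "CHAR('a::{finite,field}) dvd t" "b \<in> subfield_B q"
  shows "trace_FB q t (b :: 'a) = 0"
proof -
  have "trace_FB q t (1::'a) = of_nat t" by (simp add: trace_FB_def)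
  then show ?thesis
    using trace_FB_mult_subfield_B[OF assms(2), where x = 1 and t = t] assms(1)
    by (simp add: of_nat_eq_0_iff_char_dvd)
qed

lemma trace_FB_in_subfield_B:
  assumes q: "q = CHAR('a::{finite,field}) ^ m" and card: "CARD('a) = q ^ t"
  shows "trace_FB q t (x :: 'a) \<in> subfield_B q"
proof -
  let ?f = "\<lambda>i. x ^ (q ^ i)"
  have "trace_FB q t x ^ q = (\<Sum>i<t. ?f (Suc i))"
    unfolding trace_FB_def
    by (simp add: power_CHAR_power_sum[OF q] power_mult[symmetric] mult.commute)
  also have "\<dots> = (\<Sum>i<Suc t. ?f i) - ?f 0"
    by (simp add: sum.lessThan_Suc_shift del: sum.lessThan_Suc)
  also have "\<dots> = trace_FB q t x + ?f t - ?f 0"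
    by (simp add: trace_FB_def)
  also have "?f t = ?f 0" using power_CARD_eq_self[of x] card by simp
  finally show ?thesis unfolding subfield_B_def by simp
qed

lemma CARD_eq_powerD:
  assumes "CARD('a::{finite,field}) = q ^ t"
  shows "q \<ge> 2" "t \<ge> 1"
proof -
  have "q ^ t \<ge> 2" using CARD_field_ge_2[where 'a='a] assms by simp
  then show "t \<ge> 1" by (cases t) auto
  show "q \<ge> 2"
  proof (rule ccontr)
    assume "\<not> q \<ge> 2"
    then have "q = 0 \<or> q = 1" by auto
    then show False using \<open>q ^ t \<ge> 2\<close> by (auto simp: power_0_left split: if_splits)
  qed
qed

lemma mult_divide_power_eq:
  assumes "Q * (R + 1) = CARD('a::{finite,field})" and "(g :: 'a) \<noteq> 0"
  shows "g * (a / g) ^ Q = (g ^ R * a) ^ Q"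
proof -
  have "(g ^ R) ^ Q * g ^ Q = g"
    using assms(1) power_CARD_eq_self[of g] by (simp flip: power_add power_mult add: algebra_simps)
  then show ?thesis using assms(2) by (simp add: power_mult_distrib power_divide field_simps)
qed

lemma sum_twisted_Frobenius_eq_0:
  fixes f :: "'a::{finite,field} poly"
  assumes q: "q = CHAR('a) ^ m" and card: "CARD('a) = q ^ t"
    and j: "0 < j" "j < t"
    and deg: "degree f \<le> CARD('a) - CARD('a) div q - 1"
  shows "(\<Sum>\<alpha>\<in>UNIV-{\<beta>}. (\<alpha> - \<beta>) * (poly f \<alpha> / (\<alpha> - \<beta>)) ^ (q ^ j)) = 0"
proof -
  define n where "n = CARD('a)"
  define Q where "Q = q ^ j"
  define R where "R = q ^ (t - j) - 1"
  have q2: "q \<ge> 2" using CARD_eq_powerD[OF card] by simp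
  have "q ^ (t - j) \<ge> q ^ 1" using q2 j by (intro power_increasing) auto
  then have R1: "R \<ge> 1" unfolding R_def using q2 by simp
  have "R + 1 = q ^ (t - j)" using \<open>q ^ (t - j) \<ge> q ^ 1\<close> q2 unfolding R_def by simp
  then have QR: "Q * (R + 1) = n"
    using j card unfolding Q_def n_def by (simp flip: power_add)
  have "q ^ (t - j) \<le> q ^ (t - 1)" using q2 j by (intro power_increasing) auto
  moreover have n: "n = q * q ^ (t - 1)"
  proof -
    have "t = Suc (t - 1)" using j by simp
    then show ?thesis using card unfolding n_def by (metis power_Suc)
  qed
  moreover have "2 * q ^ (t - 1) \<le> n" using n q2 by simp
  moreover have "n div q = q ^ (t - 1)" using n q2 by simp
  moreover have "q ^ (t - j) \<ge> 1" using q2 by simp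
  ultimately have R_bound: "R + degree f + 2 \<le> n"
    using deg unfolding R_def n_def[symmetric] by linarith
  define h where "h = [:-\<beta>, 1:] ^ R * f"
  have poly_h: "poly h \<alpha> = (\<alpha> - \<beta>) ^ R * poly f \<alpha>" for \<alpha>
    unfolding h_def by (simp add: poly_power)
  have "degree h \<le> R + degree f"
    unfolding h_def using degree_mult_le[of "[:-\<beta>, 1:] ^ R" f] by (simp add: degree_linear_power)
  then have deg_h: "degree h < CARD('a) - 1" using R_bound unfolding n_def by linarith
  have twisted_eq: "(\<alpha> - \<beta>) * (poly f \<alpha> / (\<alpha> - \<beta>)) ^ Q = poly h \<alpha> ^ Q" if "\<alpha> \<noteq> \<beta>" for \<alpha>
    using mult_divide_power_eq[OF QR[unfolded n_def]] that by (simp add: poly_h)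
  have "(\<Sum>\<alpha>\<in>UNIV-{\<beta>}. (\<alpha> - \<beta>) * (poly f \<alpha> / (\<alpha> - \<beta>)) ^ Q)
        = (\<Sum>\<alpha>\<in>UNIV-{\<beta>}. poly h \<alpha> ^ Q)"
    by (intro sum.cong) (simp_all add: twisted_eq)
  also have "\<dots> = (\<Sum>\<alpha>\<in>UNIV. poly h \<alpha> ^ Q)"
    using R1 q2 by (simp add: sum_diff1 poly_h Q_def)
  also have "\<dots> = (\<Sum>\<alpha>\<in>UNIV. poly h \<alpha>) ^ Q"
    unfolding Q_def by (rule power_CHAR_power_sum[OF power_of_CHAR_power[OF q], symmetric])
  also have "\<dots> = 0" using sum_UNIV_poly_eq_0[OF deg_h] q2 by (simp add: Q_def)
  finally show ?thesis unfolding Q_def .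
qed

lemma trace_repair_formula:
  fixes f :: "'a::{finite,field} poly"
  assumes q: "q = CHAR('a) ^ m" and card: "CARD('a) = q ^ t"
    and deg: "degree f \<le> CARD('a) - CARD('a) div q - 1"
  shows "poly f \<beta> = - (\<Sum>\<alpha>\<in>UNIV-{\<beta>}. (\<alpha> - \<beta>) * trace_FB q t (poly f \<alpha> / (\<alpha> - \<beta>)))"
proof -
  let ?F = "\<lambda>j. \<Sum>\<alpha>\<in>UNIV-{\<beta>}. (\<alpha> - \<beta>) * (poly f \<alpha> / (\<alpha> - \<beta>)) ^ (q ^ j)"
  have q2: "q \<ge> 2" and t1: "t \<ge> 1" using CARD_eq_powerD[OF card] by simp_all
  have "q ^ 1 \<le> q ^ t" using q2 t1 by (intro power_increasing) auto
  then have "CARD('a) div q \<ge> 1" using card q2 by (simp add: div_greater_zero_iff Suc_le_eq)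
  then have "degree f < CARD('a) - 1" using deg CARD_field_ge_2[where 'a='a] by linarith
  then have F0: "?F 0 = - poly f \<beta>"
    using sum_UNIV_poly_eq_0[of f] by (simp add: sum_diff1)
  obtain s where t: "t = Suc s" using t1 by (cases t) auto
  have "(\<Sum>\<alpha>\<in>UNIV-{\<beta>}. (\<alpha> - \<beta>) * trace_FB q t (poly f \<alpha> / (\<alpha> - \<beta>)))
        = (\<Sum>j<t. ?F j)"
    unfolding trace_FB_def sum_distrib_left by (rule sum.swap)
  also have "\<dots> = ?F 0 + (\<Sum>j<s. ?F (Suc j))"
    unfolding t by (rule sum.lessThan_Suc_shift)
  also have "\<dots> = - poly f \<beta>"
  proof -
    have "?F (Suc j) = 0" if "j < s" for j
      by (rule sum_twisted_Frobenius_eq_0[OF q card _ _ deg]) (use that t in simp_all)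
    then show ?thesis using F0 by simp
  qed
  finally show ?thesis by simp
qed

definition trace_query :: "nat \<Rightarrow> nat \<Rightarrow> ('a \<Rightarrow> 'a) \<Rightarrow> 'a \<Rightarrow> 'a \<Rightarrow> 'a::{finite,field}" where
  "trace_query q t c e \<alpha> = trace_FB q t (c \<alpha> / (\<alpha> - e))"

definition repair_sum :: "'a list \<Rightarrow> 'a \<Rightarrow> 'a list \<Rightarrow> 'a::field" where
  "repair_sum P e v = - (\<Sum>(\<alpha>, s) \<leftarrow> zip P v. (\<alpha> - e) * s)"

lemma repair_sum_append:
  "length u = length P \<Longrightarrow>
    repair_sum (P @ Q) e (u @ w) = repair_sum P e u + repair_sum Q e w"
  by (simp add: repair_sum_def)

lemma repair_sum_append_right:
  "length u = length P \<Longrightarrow> repair_sum P e (u @ w) = repair_sum P e u"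
  using repair_sum_append[of u P "[]" e w] by (simp add: repair_sum_def)

lemma repair_sum_map:
  "distinct P \<Longrightarrow> repair_sum P e (map g P) = - (\<Sum>\<alpha>\<in>set P. (\<alpha> - e) * g \<alpha>)"
proof -
  have "zip P (map g P) = map (\<lambda>\<alpha>. (\<alpha>, g \<alpha>)) P" by (induction P) simp_all
  moreover assume "distinct P"
  ultimately show ?thesis by (simp add: repair_sum_def comp_def sum_list_distinct_conv_sum_set)
qed

lemma RS_code_eq_repair_sum:
  fixes c :: "'a::{finite,field} \<Rightarrow> 'a"
  assumes q: "q = CHAR('a) ^ m" and card: "CARD('a) = q ^ t"
    and c: "c \<in> RS_code (CARD('a) - CARD('a) div q)"
    and P: "distinct P" "set P = UNIV - {e}"
  shows "c e = repair_sum P e (map (trace_query q t c e) P)"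
proof -
  obtain f where "c = poly f" and "degree f \<le> CARD('a) - CARD('a) div q - 1"
    using c unfolding RS_code_def by blast
  then show ?thesis
    using trace_repair_formula[OF q card, of f e] P by (simp add: repair_sum_map trace_query_def)
qed

lemma trace_repair_sum_relay:
  assumes q: "q = CHAR('a::{finite,field}) ^ m" and char: "CHAR('a) dvd t"
    and "e \<noteq> d" "length u = length Q" "length w = length R"
    and w: "set w \<subseteq> subfield_B q" and b: "b \<in> subfield_B q"
    and R: "\<forall>r\<in>set R. trace_FB q t ((r - e) / (e - d)) = 0"
  shows "trace_FB q t (repair_sum (Q @ R @ [d]) e (u @ w @ [b]) / (e - d))
       = trace_FB q t (repair_sum Q e (u :: 'a list) / (e - d))"
proof -
  let ?tr = "trace_FB q t"
  have "repair_sum (Q @ R @ [d]) e (u @ w @ [b]) / (e - d)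
        = repair_sum Q e u / (e - d) + repair_sum R e w / (e - d) + b"
  proof -
    have "repair_sum (Q @ R @ [d]) e (u @ w @ [b])
          = repair_sum Q e u + repair_sum R e w - (d - e) * b"
      using assms(4,5) by (simp add: repair_sum_append) (simp add: repair_sum_def)
    moreover have "(d - e) * b / (e - d) = - b" using \<open>e \<noteq> d\<close> by (simp add: field_simps)
    ultimately show ?thesis by (simp add: add_divide_distrib diff_divide_distrib)
  qed
  moreover have "?tr (repair_sum R e w / (e - d)) = 0"
    using assms(5)[symmetric] w R
  proof (induction R w rule: list_induct2)
    case Nil
    show ?case using trace_FB_zero[OF q] by (simp add: repair_sum_def)
  next
    case (Cons r R s w)
    have "repair_sum (r # R) e (s # w) / (e - d)
          = repair_sum R e w / (e - d) - s * ((r - e) / (e - d))"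
      by (simp add: repair_sum_def divide_inverse algebra_simps)
    then show ?case
      using Cons trace_FB_mult_subfield_B[of s q t "(r - e) / (e - d)"]
      by (simp add: trace_FB_diff[OF q])
  qed
  ultimately show ?thesis
    using trace_FB_subfield_B_eq_0[OF char b] by (simp add: trace_FB_add[OF q])
qed

definition download ::
    "nat \<Rightarrow> nat \<Rightarrow> 'a list \<Rightarrow> 'a \<Rightarrow> nat \<Rightarrow> 'a::{finite,field} transmission list" where
  "download q t L e j = map (\<lambda>\<alpha>. (Inl \<alpha>, j, \<lambda>v. trace_FB q t (hd v / (\<alpha> - e)))) L"

definition relay ::
    "nat \<Rightarrow> nat \<Rightarrow> 'a list \<Rightarrow> 'a \<Rightarrow> 'a \<Rightarrow> nat \<Rightarrow> nat \<Rightarrow> 'a::{finite,field} transmission" where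
  "relay q t P e d i j = (Inr i, j, \<lambda>v. trace_FB q t (repair_sum P e v / (e - d)))"

text \<open>
  The ratio \<open>(E ! y - E ! x) / (E ! y - E ! z)\<close> is assumed to have trace zero. Nodes
  \<open>y\<close> and \<open>z\<close> first give each other their missing sub-symbol, then each sends one to
  \<open>x\<close>; node \<open>x\<close> is then complete and sends \<open>y\<close> and \<open>z\<close> the last ones.
\<close>

definition three_erasure_protocol ::
    "nat \<Rightarrow> nat \<Rightarrow> 'a list \<Rightarrow> 'a list \<Rightarrow> nat \<Rightarrow> nat \<Rightarrow> nat \<Rightarrow>
      'a::{finite,field} transmission list" where
  "three_erasure_protocol q t E L x y z =
    (let ax = E ! x; ay = E ! y; az = E ! z in
     download q t L ax x @ download q t L ay y @ download q t L az z @
     [relay q t L ay az y z, relay q t L az ay z y,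
      relay q t (L @ [az]) ay ax y x, relay q t (L @ [ay]) az ax z x,
      relay q t (L @ [ay, az]) ax ay x y, relay q t (L @ [ay, az]) ax az x z])"

lemma fold_tx_step_download:
  "fold (tx_step c) (download q t L e j) st = st(j := st j @ map (trace_query q t c e) L)"
  by (induction L arbitrary: st) (simp_all add: download_def tx_step_def trace_query_def)

lemma tx_step_relay:
  "tx_step c (relay q t P e d i j) st
    = st(j := st j @ [trace_FB q t (repair_sum P e (st i) / (e - d))])"
  by (simp add: relay_def tx_step_def)

lemma length_three_erasure_protocol:
  "length (three_erasure_protocol q t E L x y z) = 3 * length L + 6"
  by (simp add: three_erasure_protocol_def download_def Let_def)

lemma valid_three_erasure_protocol:
  assumes q: "q = CHAR('a::{finite,field}) ^ m" and card: "CARD('a) = q ^ t"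
    and "x < length E" "y < length E" "z < length E" and "set L \<inter> set E = {}"
  shows "valid_protocol (subfield_B q) E (three_erasure_protocol q t E (L :: 'a list) x y z)"
  using assms(3-6) trace_FB_in_subfield_B[OF q card]
  by (auto simp: valid_protocol_def three_erasure_protocol_def download_def relay_def Let_def)

lemma trace_FB_ratio_eq_0_variants:
  assumes q: "q = CHAR('a::{finite,field}) ^ m" and char: "CHAR('a) dvd t"
    and "b \<noteq> c" and zero_trace: "trace_FB q t ((b - a) / (b - c)) = (0 :: 'a)"
  shows "trace_FB q t ((a - b) / (b - c)) = 0" "trace_FB q t ((a - c) / (c - b)) = 0"
proof -
  have "(a - b) / (b - c) = - ((b - a) / (b - c))" by (metis minus_diff_eq minus_divide_left)
  then show "trace_FB q t ((a - b) / (b - c)) = 0" using zero_trace trace_FB_minus[OF q] by simp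
  have "b - c \<noteq> 0" "c - b \<noteq> 0" using \<open>b \<noteq> c\<close> by auto
  then have "(a - c) / (c - b) = (b - a) / (b - c) - 1" by (simp add: field_simps)
  moreover have "trace_FB q t (1 :: 'a) = 0"
    using trace_FB_subfield_B_eq_0[OF char, of 1 q] by (simp add: subfield_B_def)
  ultimately show "trace_FB q t ((a - c) / (c - b)) = 0"
    using zero_trace trace_FB_diff[OF q] by simp
qed

lemma three_erased_positions:
  assumes "length E = 3" "distinct E" "{x, y, z} = {0, 1, 2}"
  shows "{..<length E} = {x, y, z}" "distinct [x, y, z]"
    "distinct [E ! x, E ! y, E ! z]" "set E = {E ! x, E ! y, E ! z}"
proof -
  show idx: "{..<length E} = {x, y, z}" using assms(1,3) by (auto simp: lessThan_def)
  then have "x < length E" "y < length E" "z < length E" by (simp_all flip: lessThan_iff)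
  have "card {x, y, z} = 3" using assms(3) by simp
  then show "distinct [x, y, z]" by (intro card_distinct) simp
  then show "distinct [E ! x, E ! y, E ! z]"
    using \<open>x < length E\<close> \<open>y < length E\<close> \<open>z < length E\<close> assms(2)
    by (simp add: nth_eq_iff_index_eq)
  have "set E = (!) E ` {..<length E}" by (auto simp: set_conv_nth)
  then show "set E = {E ! x, E ! y, E ! z}" unfolding idx by simp
qed

lemma distinct_set_append_erased:
  assumes "distinct L" "set L = UNIV - set E" "set E = {e, a, b}" "distinct [e, a, b]"
  shows "distinct (L @ [a, b])" "set (L @ [a, b]) = UNIV - {e}"
  using assms by auto

context
  fixes q m t :: nat
  assumes q: "q = CHAR('a::{finite,field}) ^ m" and card: "CARD('a) = q ^ t"
    and char: "CHAR('a) dvd t"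
begin

lemma trace_relay_eq_trace_query:
  fixes c :: "'a \<Rightarrow> 'a"
  assumes c: "c \<in> RS_code (CARD('a) - CARD('a) div q)"
    and P: "distinct (Q @ R @ [d])" "set (Q @ R @ [d]) = UNIV - {e}"
    and R: "\<forall>r\<in>set R. trace_FB q t ((r - e) / (e - d)) = 0"
  shows "trace_FB q t (repair_sum Q e (map (trace_query q t c e) Q) / (e - d))
       = trace_query q t c d e"
proof -
  have "e \<noteq> d" using P(2) by auto
  have "set (map (trace_query q t c e) R) \<subseteq> subfield_B q"
    using trace_FB_in_subfield_B[OF q card] by (auto simp: trace_query_def)
  from trace_repair_sum_relay[OF q char \<open>e \<noteq> d\<close> length_map length_map this _ R]
  have "trace_FB q t (repair_sum Q e (map (trace_query q t c e) Q) / (e - d))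
        = trace_FB q t
            (repair_sum (Q @ R @ [d]) e (map (trace_query q t c e) (Q @ R @ [d])) / (e - d))"
    using trace_FB_in_subfield_B[OF q card] by (simp add: trace_query_def)
  also have "\<dots> = trace_FB q t (c e / (e - d))"
    using RS_code_eq_repair_sum[OF q card c P] by simp
  finally show ?thesis by (simp add: trace_query_def)
qed

lemma run_three_erasure_protocol:
  fixes c :: "'a \<Rightarrow> 'a" and E L :: "'a list"
  assumes c: "c \<in> RS_code (CARD('a) - CARD('a) div q)"
    and E: "length E = 3" "distinct E" and xyz: "{x, y, z} = {0, 1, 2}"
    and L: "distinct L" "set L = UNIV - set E"
    and zero_trace: "trace_FB q t ((E ! y - E ! x) / (E ! y - E ! z)) = 0"
  shows "run_protocol c (three_erasure_protocol q t E L x y z)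
       = (\<lambda>_. [])(x := map (trace_query q t c (E ! x)) (L @ [E ! y, E ! z]),
                  y := map (trace_query q t c (E ! y)) (L @ [E ! z, E ! x]),
                  z := map (trace_query q t c (E ! z)) (L @ [E ! y, E ! x]))"
proof -
  define ax ay az where "ax = E ! x" and "ay = E ! y" and "az = E ! z"
  define T where "T = trace_query q t c"
  have dist: "distinct [ax, ay, az]" and set_E: "set E = {ax, ay, az}"
    using three_erased_positions[OF E xyz] unfolding ax_def ay_def az_def by simp_all
  have relay: "trace_FB q t (repair_sum Q e (map (T e) Q) / (e - d)) = T d e"
    if "Q @ R @ [d] = L @ [a, b]" "set E = {e, a, b}" "distinct [e, a, b]"
      "\<forall>r\<in>set R. trace_FB q t ((r - e) / (e - d)) = 0" for Q R d e a b
    unfolding T_def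
    by (rule trace_relay_eq_trace_query[OF c _ _ that(4)])
      (simp_all only: that(1) distinct_set_append_erased[OF L that(2,3)])
  have x_to_yz:
    "trace_FB q t (repair_sum (L @ [ay, az]) ax (map (T ax) (L @ [ay, az])) / (ax - d)) = T d ax"
    for d
    using RS_code_eq_repair_sum[OF q card c distinct_set_append_erased[OF L, of ax ay az]]
      set_E dist
    by (simp add: T_def trace_query_def)
  have tr: "trace_FB q t ((ax - ay) / (ay - az)) = 0" "trace_FB q t ((ax - az) / (az - ay)) = 0"
    using trace_FB_ratio_eq_0_variants[OF q char _ zero_trace[folded ax_def ay_def az_def]] dist
    by simp_all
  have "trace_FB q t (repair_sum L ay (map (T ay) L) / (ay - az)) = T az ay"
    by (rule relay[where Q = L and R = "[ax]" and d = az and e = ay and a = ax and b = az])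
      (use set_E dist tr in \<open>auto simp: insert_commute\<close>)
  moreover have "trace_FB q t (repair_sum L az (map (T az) L) / (az - ay)) = T ay az"
    by (rule relay[where Q = L and R = "[ax]" and d = ay and e = az and a = ax and b = ay])
      (use set_E dist tr in \<open>auto simp: insert_commute\<close>)
  moreover have
    "trace_FB q t (repair_sum (L @ [az]) ay (map (T ay) (L @ [az])) / (ay - ax)) = T ax ay"
    by (rule relay[where Q = "L @ [az]" and R = "[]" and d = ax and e = ay and a = az and b = ax])
      (use set_E dist in \<open>auto simp: insert_commute\<close>)
  moreover have
    "trace_FB q t (repair_sum (L @ [ay]) az (map (T az) (L @ [ay])) / (az - ax)) = T ax az"
    by (rule relay[where Q = "L @ [ay]" and R = "[]" and d = ax and e = az and a = ay and b = ax])
      (use set_E dist in \<open>auto simp: insert_commute\<close>)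
  ultimately show ?thesis
    using x_to_yz[of ay] x_to_yz[of az] three_erased_positions(2)[OF E xyz]
    by (simp add: run_protocol_def three_erasure_protocol_def Let_def fold_tx_step_download
        tx_step_relay repair_sum_append_right flip: T_def ax_def ay_def az_def)
qed

lemma three_erasure_protocol_repairs:
  fixes E L :: "'a list"
  assumes E: "length E = 3" "distinct E" and xyz: "{x, y, z} = {0, 1, 2}"
    and L: "distinct L" "set L = UNIV - set E"
    and zero_trace: "trace_FB q t ((E ! y - E ! x) / (E ! y - E ! z)) = 0"
  shows "repairs (RS_code (CARD('a) - CARD('a) div q)) E (three_erasure_protocol q t E L x y z)"
  unfolding repairs_def
proof (intro exI ballI allI impI)
  let ?dec = "\<lambda>j v. if j = x then repair_sum (L @ [E ! y, E ! z]) (E ! x) v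
                   else if j = y then repair_sum (L @ [E ! z, E ! x]) (E ! y) v
                   else repair_sum (L @ [E ! y, E ! x]) (E ! z) v"
  fix c :: "'a \<Rightarrow> 'a" and j
  assume c: "c \<in> RS_code (CARD('a) - CARD('a) div q)" and "j < length E"
  then have "j \<in> {x, y, z}" using three_erased_positions(1)[OF E xyz] by auto
  have decode: "c e = repair_sum (L @ [a, b]) e (map (trace_query q t c e) (L @ [a, b]))"
    if "set E = {e, a, b}" "distinct [e, a, b]" for e a b
    by (rule RS_code_eq_repair_sum[OF q card c distinct_set_append_erased[OF L that]])
  note pos = three_erased_positions[OF E xyz]
  note run = run_three_erasure_protocol[OF c E xyz L zero_trace]
  from \<open>j \<in> {x, y, z}\<close> consider "j = x" | "j = y" | "j = z" by blast
  then show "?dec j (run_protocol c (three_erasure_protocol q t E L x y z) j) = c (E ! j)"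
  proof cases
    case 1
    then show ?thesis using pos decode[OF pos(4)] by (simp add: run)
  next
    case 2
    have "set E = {E ! y, E ! z, E ! x}" using pos(4) by auto
    from decode[OF this] show ?thesis using 2 pos by (auto simp: run)
  next
    case 3
    have "set E = {E ! z, E ! y, E ! x}" using pos(4) by auto
    from decode[OF this] show ?thesis using 3 pos by (auto simp: run)
  qed
qed

lemma three_erasure_repair_scheme:
  fixes E :: "'a list"
  assumes E: "length E = 3" "distinct E" and xyz: "{x, y, z} = {0, 1, 2}"
    and zero_trace: "trace_FB q t ((E ! y - E ! x) / (E ! y - E ! z)) = 0"
  shows "distributed_repair_scheme (subfield_B q) (RS_code (CARD('a) - CARD('a) div q)) E
           (3 * (CARD('a) - 1))"
proof -
  obtain L where L: "distinct L" "set L = UNIV - set E"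
    using finite_distinct_list[of "UNIV - set E"] by auto
  have "card (set E) \<le> CARD('a)" by (rule card_mono) simp_all
  then have "length (three_erasure_protocol q t E L x y z) = 3 * (CARD('a) - 1)"
    using L E by (simp add: length_three_erasure_protocol distinct_card[symmetric] card_Diff_subset)
  moreover have "valid_protocol (subfield_B q) E (three_erasure_protocol q t E L x y z)"
    using three_erased_positions(1)[OF E xyz] L
    by (intro valid_three_erasure_protocol[OF q card]) auto
  ultimately show ?thesis
    unfolding distributed_repair_scheme_def
    using three_erasure_protocol_repairs[OF E xyz L zero_trace] by blast
qed

end

theorem theorem5:
  fixes p m t :: nat
    and a1 a2 a3 :: "'a::{finite,field}"
  assumes "prime p" and "m \<ge> 1" and "t \<ge> 1"
    and "CARD('a) = p ^ (m * t)"
    and "p dvd t"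
    and "distinct [a1, a2, a3]"
    and "{(a2 - a1) / (a2 - a3), (a3 - a2) / (a3 - a1), (a1 - a3) / (a1 - a2)}
           \<inter> {x. trace_FB (p ^ m) t x = 0} \<noteq> {}"
  shows "distributed_repair_scheme (subfield_B (p ^ m))
           (RS_code (CARD('a) - CARD('a) div (p ^ m)))
           [a1, a2, a3] (3 * (CARD('a) - 1))"
proof -
  have char: "CHAR('a) = p" by (rule CHAR_eq_prime_if_CARD_eq_power[OF assms(1,4)])
  note scheme = three_erasure_repair_scheme[of "p ^ m" m t "[a1, a2, a3]"]
  have "p ^ m = CHAR('a) ^ m" "CARD('a) = (p ^ m) ^ t" "CHAR('a) dvd t"
    using char assms(4,5) by (simp_all add: power_mult)
  note scheme = scheme[OF this _ assms(6)]
  from assms(7) consider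
      "trace_FB (p ^ m) t ((a2 - a1) / (a2 - a3)) = 0"
    | "trace_FB (p ^ m) t ((a3 - a2) / (a3 - a1)) = 0"
    | "trace_FB (p ^ m) t ((a1 - a3) / (a1 - a2)) = 0" by blast
  then show ?thesis
  proof cases
    case 1
    then show ?thesis using scheme[of 0 1 2] by simp
  next
    case 2
    then show ?thesis using scheme[of 1 2 0] by (simp add: insert_commute)
  next
    case 3
    then show ?thesis using scheme[of 2 0 1] by (simp add: insert_commute)
  qed
qed

end
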